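(* Let $H\in\mathbb{R}^{n\times n}$ be symmetric with $\lambda_1:=\lambda_{\min}(H)<0$ and unit eigenvector $v_1$, and let $g\in\mathbb{R}^n$ with $g^{(1)}:=g^\intercal v_1\neq 0$. For $a\in\mathbb{R}^n$ write $a^{(1)}=a^\intercal v_1$. Let $\eta>0$ and $z_0=-\alpha\frac{g}{\|g\|}$ with $0<\alpha<1$, and consider the phase I iteration $z_{t+1}=z_t-\eta(Hz_t+g)$ of Algorithm 1. Then phase I terminates, i.e. there is an index $T_1\ge 0$ with $\|z_t\|<1$ for all $t\le T_1$ and $\|z_{T_1+1}\|\ge 1$, and $$T_1\le \frac{1}{\log(1-\eta\lambda_1)}\Big[\log\Big(\frac{1}{\eta|g^{(1)}|}-\frac{1}{\eta\lambda_1}\Big)-\log\Big(\frac{-z_0^{(1)}}{\eta g^{(1)}}-\frac{1}{\eta\lambda_1}\Big)\Big].$$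
   Context: Algorithm 1 solves $\min_{\|z\|_2\le1}\frac12 z^\intercal Hz+g^\intercal z$; its phase I starts from $z_0$ and performs plain gradient steps $z_{t+1}=z_t-\eta(Hz_t+g)$ while $\|z_t\|<1$; $T_1$ denotes the number of phase I iterations as specified in the claim. *)

theory Defs
  imports "HOL-Analysis.Analysis"
begin

fun phaseI_iter :: "real^'n^'n \<Rightarrow> real^'n \<Rightarrow> real \<Rightarrow> real^'n \<Rightarrow> nat \<Rightarrow> real^'n" where
  "phaseI_iter H g eta z0 0 = z0"
| "phaseI_iter H g eta z0 (Suc t) =
     phaseI_iter H g eta z0 t - eta *\<^sub>R (H *v phaseI_iter H g eta z0 t + g)"

definition is_min_eigenvalue :: "real^'n^'n \<Rightarrow> real \<Rightarrow> bool" where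
  "is_min_eigenvalue H lam \<longleftrightarrow>
     (\<exists>v. v \<noteq> 0 \<and> H *v v = lam *\<^sub>R v) \<and>
     (\<forall>mu v. v \<noteq> 0 \<and> H *v v = mu *\<^sub>R v \<longrightarrow> lam \<le> mu)"

end

theory Submission
  imports Defs
begin

text \<open>Along a unit eigenvector v of H for an eigenvalue lam < 0, the component
  c t = z t \<bullet> v of the iterate satisfies c (t+1) = q c t - eta (g \<bullet> v) with
  q = 1 - eta lam > 1, so it is repelled geometrically from the fixed point
  -(g \<bullet> v) / lam.  If c 0 lies on the side of that fixed point facing the origin
  (kappa > 0 below), then c t = -(g \<bullet> v) (q^t kappa + 1 / lam) is pushed through 0
  and grows like q^t; since norm (z t) \<ge> abs (c t), the iterate must leave the
  unit ball, and solving abs (c t) < 1 for t gives the logarithmic bound.\<close>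

lemma inner_symmetric_matrix_eigenvector:
  fixes H :: "real^'n^'n"
  assumes "transpose H = H" and "H *v v = lam *\<^sub>R v"
  shows "(H *v x) \<bullet> v = lam * (x \<bullet> v)"
proof -
  have "(H *v x) \<bullet> v = (v v* H) \<bullet> x"
    by (metis dot_lmul_matrix inner_commute)
  also have "v v* H = transpose H *v v"
    by simp
  also have "\<dots> = lam *\<^sub>R v"
    using assms by simp
  finally show ?thesis
    by (simp add: inner_commute)
qed

lemma phaseI_iter_inner_eigenvector:
  fixes H :: "real^'n^'n"
  assumes "transpose H = H" and "H *v v = lam *\<^sub>R v" and "lam \<noteq> 0"
  shows "phaseI_iter H g eta z0 t \<bullet> v
           = - (g \<bullet> v) / lam + (1 - eta * lam) ^ t * (z0 \<bullet> v + (g \<bullet> v) / lam)"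
proof (induction t)
  case 0
  show ?case by simp
next
  case (Suc t)
  have "phaseI_iter H g eta z0 (Suc t) \<bullet> v
          = (1 - eta * lam) * (phaseI_iter H g eta z0 t \<bullet> v) - eta * (g \<bullet> v)"
    using inner_symmetric_matrix_eigenvector[OF assms(1,2)]
    by (simp add: inner_diff_left inner_add_left algebra_simps)
  also have "\<dots> = - (g \<bullet> v) / lam + (1 - eta * lam) ^ Suc t * (z0 \<bullet> v + (g \<bullet> v) / lam)"
    unfolding Suc.IH using assms(3) by (simp add: field_simps)
  finally show ?case .
qed

lemma first_exit_index:
  fixes P :: "nat \<Rightarrow> bool"
  assumes "\<not> P 0" and "P N"
  shows "\<exists>T. (\<forall>t\<le>T. \<not> P t) \<and> P (Suc T)"
proof -
  have "P (Least P)"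
    using assms(2) by (rule LeastI)
  with assms(1) obtain T where T: "Least P = Suc T"
    by (cases "Least P") auto
  then have "\<forall>t\<le>T. \<not> P t"
    using not_less_Least[of _ P] by (metis le_imp_less_Suc)
  with T \<open>P (Least P)\<close> show ?thesis
    by auto
qed

lemma phaseI_iter_escape_time:
  fixes H :: "real^'n^'n" and g v z0 :: "real^'n" and lam eta :: real
  defines "q \<equiv> 1 - eta * lam"
    and "\<kappa> \<equiv> - (z0 \<bullet> v) / (g \<bullet> v) - 1 / lam"
  assumes symH: "transpose H = H"
    and v_eig: "H *v v = lam *\<^sub>R v" and v_unit: "norm v = 1"
    and lam: "lam < 0" and gv: "g \<bullet> v \<noteq> 0" and eta: "eta > 0"
    and z0: "norm z0 < 1" and \<kappa>: "\<kappa> > 0"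
  shows "\<exists>T. (\<forall>t\<le>T. norm (phaseI_iter H g eta z0 t) < 1)
           \<and> norm (phaseI_iter H g eta z0 (Suc T)) \<ge> 1
           \<and> real T < log q ((1 / \<bar>g \<bullet> v\<bar> - 1 / lam) / \<kappa>)"
proof -
  define z where "z = phaseI_iter H g eta z0"
  define B where "B = 1 / \<bar>g \<bullet> v\<bar> - 1 / lam"
  have q: "q > 1"
    using eta lam by (simp add: q_def mult_pos_neg)
  have "z0 \<bullet> v + (g \<bullet> v) / lam = - (g \<bullet> v) * \<kappa>"
    using gv by (simp add: \<kappa>_def field_simps)
  then have component: "z t \<bullet> v = - (g \<bullet> v) * (q ^ t * \<kappa> + 1 / lam)" for t
    using phaseI_iter_inner_eigenvector[OF symH v_eig, of g eta z0 t] lam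
    by (simp add: z_def q_def algebra_simps)
  have norm_lower: "\<bar>g \<bullet> v\<bar> * (q ^ t * \<kappa> + 1 / lam) \<le> norm (z t)" for t
  proof -
    have "\<bar>g \<bullet> v\<bar> * (q ^ t * \<kappa> + 1 / lam) \<le> \<bar>z t \<bullet> v\<bar>"
      by (simp add: component abs_mult mult_left_mono)
    also have "\<dots> \<le> norm (z t)"
      using Cauchy_Schwarz_ineq2[of "z t" v] v_unit by simp
    finally show ?thesis .
  qed
  have inside_bound: "q ^ t * \<kappa> < B" if "norm (z t) < 1" for t
  proof -
    have "\<bar>g \<bullet> v\<bar> * (q ^ t * \<kappa> + 1 / lam) < 1"
      using norm_lower[of t] that by linarith
    then show ?thesis
      using gv by (simp add: B_def field_simps)
  qed
  obtain N where "B / \<kappa> < q ^ N"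
    using real_arch_pow[OF q] by blast
  then have "1 \<le> norm (z N)"
    using inside_bound[of N] \<kappa> by (force simp: pos_divide_less_eq)
  moreover have "\<not> 1 \<le> norm (z 0)"
    using z0 by (simp add: z_def)
  ultimately obtain T where "\<forall>t\<le>T. \<not> 1 \<le> norm (z t)" and exit: "1 \<le> norm (z (Suc T))"
    using first_exit_index[of "\<lambda>t. 1 \<le> norm (z t)"] by blast
  then have inside: "\<forall>t\<le>T. norm (z t) < 1"
    by (simp add: not_le)
  have "q ^ T < B / \<kappa>"
    using inside_bound[of T] inside \<kappa> by (simp add: pos_less_divide_eq)
  then have "real T < log q (B / \<kappa>)"
    using q by (rule less_log_of_power)
  with inside exit show ?thesis
    by (auto simp: z_def B_def)
qed

theorem lemma2:
  fixes H :: "real^'n^'n" and g v1 :: "real^'n" and lam1 eta alpha :: real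
  assumes symH: "transpose H = H"
    and lmin: "is_min_eigenvalue H lam1"
    and lneg: "lam1 < 0"
    and v1_eig: "H *v v1 = lam1 *\<^sub>R v1"
    and v1_unit: "norm v1 = 1"
    and g1: "g \<bullet> v1 \<noteq> 0"
    and eta: "eta > 0"
    and alpha: "0 < alpha" "alpha < 1"
  shows "\<exists>T1::nat.
     (\<forall>t\<le>T1. norm (phaseI_iter H g eta (- (alpha / norm g) *\<^sub>R g) t) < 1)
   \<and> norm (phaseI_iter H g eta (- (alpha / norm g) *\<^sub>R g) (T1 + 1)) \<ge> 1
   \<and> real T1 \<le> (1 / ln (1 - eta * lam1)) *
        (ln (1 / (eta * \<bar>g \<bullet> v1\<bar>) - 1 / (eta * lam1))
         - ln (- ((- (alpha / norm g) *\<^sub>R g) \<bullet> v1) / (eta * (g \<bullet> v1)) - 1 / (eta * lam1)))"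
proof -
  define z0 where "z0 = - (alpha / norm g) *\<^sub>R g"
  define B where "B = 1 / \<bar>g \<bullet> v1\<bar> - 1 / lam1"
  define \<kappa> where "\<kappa> = - (z0 \<bullet> v1) / (g \<bullet> v1) - 1 / lam1"
  have "g \<noteq> 0"
    using g1 by auto
  then have z0_norm: "norm z0 < 1"
    using alpha by (simp add: z0_def)
  have "\<kappa> = alpha / norm g - 1 / lam1"
    using g1 by (simp add: \<kappa>_def z0_def)
  moreover have "alpha / norm g > 0" "1 / \<bar>g \<bullet> v1\<bar> > 0" "1 / lam1 < 0"
    using alpha lneg g1 \<open>g \<noteq> 0\<close> by auto
  ultimately have \<kappa>_pos: "\<kappa> > 0" and B_pos: "B > 0"
    unfolding B_def by linarith+
  obtain T where inside: "\<forall>t\<le>T. norm (phaseI_iter H g eta z0 t) < 1"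
    and exit: "norm (phaseI_iter H g eta z0 (Suc T)) \<ge> 1"
    and bound: "real T < log (1 - eta * lam1) (B / \<kappa>)"
    using phaseI_iter_escape_time[OF symH v1_eig v1_unit lneg g1 eta z0_norm] \<kappa>_pos
    unfolding B_def \<kappa>_def by blast
  have "log (1 - eta * lam1) (B / \<kappa>)
          = (1 / ln (1 - eta * lam1)) * (ln (B / eta) - ln (\<kappa> / eta))"
    using B_pos \<kappa>_pos eta by (simp add: log_def ln_div)
  also have "B / eta = 1 / (eta * \<bar>g \<bullet> v1\<bar>) - 1 / (eta * lam1)"
    using eta by (simp add: B_def field_simps)
  also have "\<kappa> / eta = - (z0 \<bullet> v1) / (eta * (g \<bullet> v1)) - 1 / (eta * lam1)"
    using eta by (simp add: \<kappa>_def field_simps)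
  finally have "real T \<le> (1 / ln (1 - eta * lam1)) *
      (ln (1 / (eta * \<bar>g \<bullet> v1\<bar>) - 1 / (eta * lam1))
       - ln (- (z0 \<bullet> v1) / (eta * (g \<bullet> v1)) - 1 / (eta * lam1)))"
    using bound by linarith
  with inside exit show ?thesis
    unfolding z0_def Suc_eq_plus1 by blast
qed

end
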